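(* The relation $\{(\rho,\sigma,\pi):\sigma=[n],\ \rho=[r],\text{ and the part } r \text{ appears in }\pi\text{ exactly }n\text{ times}\}$ is $\Pi_3$-definable in $\mathbf Y^*=\langle\mathcal P,\le,[1]+[1]\rangle$.
   Context: $\mathcal P$ is the set of all integer partitions, including the empty partition; a partition is a nonincreasing finite sequence of positive integers (its parts). $[n]$ denotes the partition with a single part $n$. Young's lattice $\mathbf Y=\langle\mathcal P,\le\rangle$ has $(s_1,\dots,s_r)\le(n_1,\dots,n_t)$ iff $r\le t$ and $s_i\le n_i$ for all $i\le r$; $\mathbf Y^*$ is $\mathbf Y$ with a constant symbol for the partition $(1,1)$. A relation is $\Pi_n$-definable if it is defined by a first-order formula in the language $\{\le,(1,1)\}$ in prenex form with $n$ alternating quantifier blocks, the outermost universal, and a quantifier-free matrix. *)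

theory Defs
  imports Main
begin

typedef partition = "{xs :: nat list. sorted_wrt (\<ge>) xs \<and> 0 \<notin> set xs}"
  by (rule exI[of _ "[]"]) simp

definition young_le :: "partition \<Rightarrow> partition \<Rightarrow> bool" where
  "young_le p q \<longleftrightarrow> length (Rep_partition p) \<le> length (Rep_partition q) \<and>
     (\<forall>i < length (Rep_partition p). Rep_partition p ! i \<le> Rep_partition q ! i)"

text \<open>The partition [n] with a single part n (meaningful for n \<ge> 1).\<close>
definition single :: "nat \<Rightarrow> partition" where
  "single n = Abs_partition [n]"

definition one_one :: partition where
  "one_one = Abs_partition [1, 1]"

definition mult_part :: "nat \<Rightarrow> partition \<Rightarrow> nat" where
  "mult_part r p = count_list (Rep_partition p) r"

datatype trm = V nat | C

datatype fm = Le trm trm | Eq trm trm | Tru | Fls | Neg fm | Conj fm fm | Disj fm fm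
  | Ex nat fm | All nat fm

fun tval :: "(nat \<Rightarrow> partition) \<Rightarrow> trm \<Rightarrow> partition" where
  "tval e (V x) = e x"
| "tval e C = one_one"

fun sat :: "fm \<Rightarrow> (nat \<Rightarrow> partition) \<Rightarrow> bool" where
  "sat (Le s t) e = young_le (tval e s) (tval e t)"
| "sat (Eq s t) e = (tval e s = tval e t)"
| "sat Tru e = True"
| "sat Fls e = False"
| "sat (Neg f) e = (\<not> sat f e)"
| "sat (Conj f g) e = (sat f e \<and> sat g e)"
| "sat (Disj f g) e = (sat f e \<or> sat g e)"
| "sat (Ex x f) e = (\<exists>p. sat f (e(x := p)))"
| "sat (All x f) e = (\<forall>p. sat f (e(x := p)))"

fun qf :: "fm \<Rightarrow> bool" where
  "qf (Neg f) = qf f"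
| "qf (Conj f g) = (qf f \<and> qf g)"
| "qf (Disj f g) = (qf f \<and> qf g)"
| "qf (Ex x f) = False"
| "qf (All x f) = False"
| "qf _ = True"

fun exblock :: "nat list \<Rightarrow> fm \<Rightarrow> fm" where
  "exblock [] f = f"
| "exblock (x # xs) f = Ex x (exblock xs f)"

fun allblock :: "nat list \<Rightarrow> fm \<Rightarrow> fm" where
  "allblock [] f = f"
| "allblock (x # xs) f = All x (allblock xs f)"

fun is_Pi :: "nat \<Rightarrow> fm \<Rightarrow> bool" and is_Sigma :: "nat \<Rightarrow> fm \<Rightarrow> bool" where
  "is_Pi 0 f = qf f"
| "is_Sigma 0 f = qf f"
| "is_Pi (Suc n) f = (\<exists>xs g. f = allblock xs g \<and> is_Sigma n g)"
| "is_Sigma (Suc n) f = (\<exists>xs g. f = exblock xs g \<and> is_Pi n g)"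

definition Pi_definable3 :: "nat \<Rightarrow> (partition \<Rightarrow> partition \<Rightarrow> partition \<Rightarrow> bool) \<Rightarrow> bool" where
  "Pi_definable3 n R \<longleftrightarrow> (\<exists>f. is_Pi n f \<and> (\<forall>e. sat f e \<longleftrightarrow> R (e 0) (e 1) (e 2)))"

end

theory Submission
  imports Defs
begin

text \<open>
  Young's order can express, with at most one universal quantifier each, that a partition is a
  single row [k], that one row is the successor of another, that a partition is a single
  column, and that a partition contains a given rectangle.

  With a the number of parts of \<pi> exceeding r, the part r occurs exactly n times in \<pi> iff
  \<pi> has a part r at index a + n - 1 but not at index a + n. That index is the number of rows
  of the staircase G consisting of a rows of length n + 1 followed by rows n, n - 1, ..., 1.
  Among partitions whose first row has length n or n + 1, the staircases are characterised by
  a \<forall>\<exists> condition: every interval of length two below G that is a chain removes a domino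
  lying outside the truncation of G to width n. The number a is matched with \<pi> by comparing
  the rectangles contained in G and in \<pi>. Putting these descriptions into prenex form yields
  a \<forall>\<exists>\<forall> formula.
\<close>

definition part :: "partition \<Rightarrow> nat \<Rightarrow> nat" where
  "part p i = (if i < length (Rep_partition p) then Rep_partition p ! i else 0)"

abbreviation num_parts :: "partition \<Rightarrow> nat" where
  "num_parts p \<equiv> length (Rep_partition p)"

lemma part_antimono:
  assumes "i \<le> j"
  shows "part p j \<le> part p i"
proof -
  have "sorted_wrt (\<ge>) (Rep_partition p)"
    using Rep_partition[of p] by simp
  then show ?thesis
    using assms by (cases "i = j") (auto simp: part_def sorted_wrt_iff_nth_less)
qed

lemma part_Suc_le: "part p (Suc i) \<le> part p i"
  by (rule part_antimono) simp

lemma part_pos_iff: "0 < part p i \<longleftrightarrow> i < num_parts p"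
proof -
  have "0 \<notin> set (Rep_partition p)"
    using Rep_partition[of p] by simp
  then show ?thesis
    by (auto simp: part_def) (metis gr0I nth_mem)
qed

lemma part_eq_0: "num_parts p \<le> i \<Longrightarrow> part p i = 0"
  by (simp add: part_def)

lemma num_parts_eqI:
  assumes "\<And>i. 0 < part p i \<longleftrightarrow> i < k"
  shows "num_parts p = k"
  using assms[of "num_parts p"] assms[of k] part_pos_iff[of p] by (metis less_irrefl linorder_neqE_nat)

lemma young_le_iff_part: "young_le p q \<longleftrightarrow> (\<forall>i. part p i \<le> part q i)"
proof
  assume "\<forall>i. part p i \<le> part q i"
  moreover from this have "num_parts p \<le> num_parts q"
    using part_pos_iff[of p "num_parts q"] part_eq_0[of q "num_parts q"]
    by (metis le_zero_eq not_le not_less0 order_refl)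
  ultimately show "young_le p q"
    by (auto simp: young_le_def part_def split: if_splits)
qed (auto simp: young_le_def part_def)

lemma partition_eq_iff_part: "p = q \<longleftrightarrow> part p = part q"
proof
  assume eq: "part p = part q"
  then have "num_parts p = num_parts q"
    by (metis num_parts_eqI part_pos_iff)
  with eq have "Rep_partition p = Rep_partition q"
    by (metis nth_equalityI part_def)
  then show "p = q"
    by (simp add: Rep_partition_inject)
qed simp

lemma ex_partition_parts:
  assumes antitone: "\<And>i. f (Suc i) \<le> (f i :: nat)" and vanish: "\<And>i. N \<le> i \<Longrightarrow> f i = 0"
  shows "\<exists>p. part p = f"
proof -
  have mono: "f j \<le> f i" if "i \<le> j" for i j
    using lift_Suc_antimono_le[of f] antitone that by blast
  define L where "L = (LEAST i. f i = 0)"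
  have "f L = 0"
    unfolding L_def by (rule LeastI[of _ N]) (simp add: vanish)
  then have zero: "L \<le> i \<Longrightarrow> f i = 0" for i
    using mono[of L i] by simp
  have pos: "i < L \<Longrightarrow> 0 < f i" for i
    unfolding L_def using not_less_Least by auto
  define xs where "xs = map f [0..<L]"
  have "sorted_wrt (\<ge>) xs \<and> 0 \<notin> set xs"
    unfolding xs_def using pos mono by (auto simp: sorted_wrt_iff_nth_less) (metis less_irrefl)
  then have "Rep_partition (Abs_partition xs) = xs"
    by (simp add: Abs_partition_inverse)
  then have "part (Abs_partition xs) = f"
    by (auto simp: part_def xs_def zero)
  then show ?thesis ..
qed

lemma ex_partition_update:
  assumes "part p (Suc i) \<le> c" and "0 < i \<Longrightarrow> c \<le> part p (i - 1)"
  shows "\<exists>q. part q = (part p)(i := c)"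
proof (rule ex_partition_parts)
  show "((part p)(i := c)) (Suc j) \<le> ((part p)(i := c)) j" for j
    using assms part_Suc_le[of p j] by (cases "Suc j = i") auto
  show "((part p)(i := c)) j = 0" if "Suc (max i (num_parts p)) \<le> j" for j
    using that by (auto simp: part_eq_0)
qed

lemma part_single: "1 \<le> n \<Longrightarrow> part (single n) = (\<lambda>_. 0)(0 := n)"
  by (auto simp: part_def single_def Abs_partition_inverse)

lemma part_one_one: "part one_one i = (if i < 2 then 1 else 0)"
  by (auto simp: part_def one_one_def Abs_partition_inverse nth_Cons split: nat.splits)

lemma mult_part_eq_card: "0 < r \<Longrightarrow> mult_part r p = card {i. part p i = r}"
  unfolding mult_part_def count_list_eq_length_filter length_filter_conv_card
  by (rule arg_cong[where f = card]) (auto simp: part_def)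

definition is_row :: "partition \<Rightarrow> bool" where
  "is_row z \<longleftrightarrow> \<not> young_le one_one z"

lemma is_row_iff_part: "is_row z \<longleftrightarrow> part z 1 = 0"
proof -
  have "young_le one_one z \<longleftrightarrow> 1 \<le> part z 0 \<and> 1 \<le> part z 1"
    unfolding young_le_iff_part part_one_one
    by (auto simp: less_2_cases_iff)
  then show ?thesis
    using part_Suc_le[of z 0] by (auto simp: is_row_def)
qed

lemma row_part: "is_row z \<Longrightarrow> 0 < i \<Longrightarrow> part z i = 0"
  using part_antimono[of 1 i z] by (simp add: is_row_iff_part)

lemma row_le_iff:
  assumes "is_row a"
  shows "young_le a b \<longleftrightarrow> part a 0 \<le> part b 0"
proof
  assume "part a 0 \<le> part b 0"
  then have "part a i \<le> part b i" for i
    using row_part[OF assms, of i] by (cases i) auto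
  then show "young_le a b"
    by (simp add: young_le_iff_part)
qed (simp add: young_le_iff_part)

lemma row_eq_iff:
  assumes "is_row a" and "is_row b"
  shows "a = b \<longleftrightarrow> part a 0 = part b 0"
  using row_part[OF assms(1)] row_part[OF assms(2)]
  by (auto simp: partition_eq_iff_part fun_eq_iff) (metis gr0I)

lemma ex_row: "\<exists>z. is_row z \<and> part z 0 = s"
proof -
  obtain z where "part z = (\<lambda>_. 0)(0 := s)"
    using ex_partition_parts[of "(\<lambda>_. 0)(0 := s)" 1] by auto
  then show ?thesis
    using is_row_iff_part[of z] by auto
qed

lemma is_row_single: "1 \<le> r \<Longrightarrow> is_row (single r) \<and> part (single r) 0 = r"
  by (simp add: is_row_iff_part part_single)

lemma nonempty_row_iff_single: "is_row p \<and> (\<exists>y. \<not> young_le p y) \<longleftrightarrow> (\<exists>r\<ge>1. p = single r)"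
proof
  assume p: "is_row p \<and> (\<exists>y. \<not> young_le p y)"
  then obtain y where "\<not> young_le p y"
    by blast
  then have "1 \<le> part p 0"
    using p row_le_iff[of p y] by simp
  with p have "p = single (part p 0)"
    using row_eq_iff[of p "single (part p 0)"] is_row_single[of "part p 0"] by simp
  with \<open>1 \<le> part p 0\<close> show "\<exists>r\<ge>1. p = single r"
    by blast
next
  assume "\<exists>r\<ge>1. p = single r"
  then have p: "is_row p" "1 \<le> part p 0"
    using is_row_single by auto
  obtain e where "part e 0 = 0"
    using ex_row by blast
  with p have "\<not> young_le p e"
    by (simp add: row_le_iff)
  with p show "is_row p \<and> (\<exists>y. \<not> young_le p y)"
    by blast
qed

definition next_row :: "partition \<Rightarrow> partition \<Rightarrow> bool" where
  "next_row t t' \<longleftrightarrow> is_row t' \<and> young_le t t' \<and> t \<noteq> t' \<and>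
     (\<forall>z. is_row z \<and> young_le t z \<and> t \<noteq> z \<longrightarrow> young_le t' z)"

lemma next_row_iff:
  assumes t: "is_row t"
  shows "next_row t t' \<longleftrightarrow> is_row t' \<and> part t' 0 = Suc (part t 0)"
proof
  assume succ: "next_row t t'"
  then have t': "is_row t'" and less: "part t 0 < part t' 0"
    using t by (auto simp: next_row_def row_le_iff row_eq_iff)
  obtain z where z: "is_row z" "part z 0 = Suc (part t 0)"
    using ex_row by blast
  then have "young_le t' z"
    using succ t by (auto simp: next_row_def row_le_iff row_eq_iff)
  then show "is_row t' \<and> part t' 0 = Suc (part t 0)"
    using t' less z by (simp add: row_le_iff)
qed (use t in \<open>auto simp: next_row_def row_le_iff row_eq_iff\<close>)

definition is_row_two :: "partition \<Rightarrow> bool" where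
  "is_row_two d \<longleftrightarrow> is_row d \<and> \<not> young_le d one_one \<and>
     (\<forall>z. is_row z \<and> \<not> young_le z one_one \<longrightarrow> young_le d z)"

lemma is_row_two_iff: "is_row_two d \<longleftrightarrow> is_row d \<and> part d 0 = 2"
proof
  assume d: "is_row_two d"
  obtain z where z: "is_row z" "part z 0 = 2"
    using ex_row by blast
  moreover have "\<not> young_le z one_one"
    using z by (simp add: row_le_iff part_one_one)
  ultimately have "young_le d z"
    using d by (simp add: is_row_two_def)
  moreover have "2 \<le> part d 0"
    using d row_le_iff[of d one_one] by (simp add: is_row_two_def part_one_one)
  ultimately show "is_row d \<and> part d 0 = 2"
    using d z by (simp add: is_row_two_def row_le_iff)
qed (auto simp: is_row_two_def row_le_iff part_one_one)

lemma not_row_two_le_iff: "is_row_two d \<Longrightarrow> \<not> young_le d z \<longleftrightarrow> part z 0 \<le> 1"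
  by (auto simp: is_row_two_iff row_le_iff)

lemma column_part: "part z 0 \<le> 1 \<Longrightarrow> part z i = (if i < num_parts z then 1 else 0)"
  using part_antimono[of 0 i z] part_pos_iff[of z i] by auto

lemma column_le_iff:
  assumes "part K 0 \<le> 1"
  shows "young_le K G \<longleftrightarrow> num_parts K \<le> num_parts G"
proof
  assume "num_parts K \<le> num_parts G"
  then have "part K i \<le> part G i" for i
    using column_part[OF assms, of i] part_pos_iff[of G i] by auto
  then show "young_le K G"
    by (simp add: young_le_iff_part)
qed (simp add: young_le_def)

lemma column_eq_iff:
  assumes "part K 0 \<le> 1" and "part K' 0 \<le> 1"
  shows "K = K' \<longleftrightarrow> num_parts K = num_parts K'"
proof
  assume "num_parts K = num_parts K'"
  then show "K = K'"
    using column_part[OF assms(1)] column_part[OF assms(2)]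
    by (simp add: partition_eq_iff_part fun_eq_iff)
qed simp

lemma ex_rectangle: "\<exists>w. part w = (\<lambda>i. if i < k then c else 0)"
  by (rule ex_partition_parts[of _ k]) auto

lemma num_parts_rectangle: "part w = (\<lambda>i. if i < k then c else 0) \<Longrightarrow> 0 < c \<Longrightarrow> num_parts w = k"
  by (rule num_parts_eqI) simp

lemma ex_column: "\<exists>K. part K 0 \<le> 1 \<and> num_parts K = k"
proof -
  obtain K where "part K = (\<lambda>i. if i < k then 1 else 0)"
    using ex_rectangle by blast
  then show ?thesis
    using num_parts_rectangle[of K k 1] by (intro exI[of _ K]) simp
qed

definition truncation :: "partition \<Rightarrow> partition \<Rightarrow> partition \<Rightarrow> bool" where
  "truncation G th T \<longleftrightarrow> young_le T G \<and> \<not> young_le th T \<and>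
     (\<forall>w. young_le w G \<and> \<not> young_le w T \<longrightarrow> young_le th w)"

lemma truncation_part:
  assumes th: "is_row th" and trunc: "truncation G th T"
  shows "part T i = min (part G i) (part th 0 - 1)"
proof -
  have narrow: "part T i < part th 0"
    using trunc th part_antimono[of 0 i T] by (auto simp: truncation_def row_le_iff)
  show ?thesis
  proof (cases "part T i = part G i")
    case False
    then have less: "part T i < part G i"
      using trunc by (auto simp: truncation_def young_le_iff_part le_less)
    obtain w where w: "part w = (\<lambda>j. if j < Suc i then Suc (part T i) else 0)"
      using ex_rectangle by blast
    have "young_le w G"
      unfolding young_le_iff_part w using less part_antimono[of _ i G]
      by (auto simp: less_Suc_eq_le) (meson Suc_leI le_trans)
    moreover have "\<not> young_le w T"
      by (auto simp: young_le_iff_part w intro!: exI[of _ i])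
    ultimately have "young_le th w"
      using trunc by (simp add: truncation_def)
    then have "part th 0 \<le> Suc (part T i)"
      using th by (simp add: row_le_iff w)
    then show ?thesis
      using less narrow by simp
  qed (use narrow in simp)
qed

lemma truncation_iff:
  assumes th: "is_row th" "1 \<le> part th 0"
  shows "truncation G th T \<longleftrightarrow> part T = (\<lambda>i. min (part G i) (part th 0 - 1))"
proof
  assume "truncation G th T"
  then show "part T = (\<lambda>i. min (part G i) (part th 0 - 1))"
    using truncation_part[OF th(1)] by blast
next
  assume T: "part T = (\<lambda>i. min (part G i) (part th 0 - 1))"
  have "young_le th w" if w: "young_le w G" "\<not> young_le w T" for w
  proof -
    obtain i where i: "part T i < part w i" "part w i \<le> part G i"
      using w by (auto simp: young_le_iff_part not_le)
    then have "part th 0 - 1 < part w 0"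
      using T part_antimono[of 0 i w] by (auto simp: min_def split: if_splits)
    then show ?thesis
      using th by (simp add: row_le_iff)
  qed
  moreover have "\<not> young_le th T"
    using T th by (simp add: row_le_iff) arith
  moreover have "young_le T G"
    using T by (simp add: young_le_iff_part)
  ultimately show "truncation G th T"
    by (simp add: truncation_def)
qed

text \<open>For a row th and a column K this says that P contains the rectangle with |K| - 1 rows
  of length th - 1.\<close>
definition contains_box :: "partition \<Rightarrow> partition \<Rightarrow> partition \<Rightarrow> bool" where
  "contains_box K th P \<longleftrightarrow> (\<forall>w. \<not> young_le th w \<and> \<not> young_le K w \<longrightarrow> young_le w P)"

lemma contains_box_iff:
  assumes th: "is_row th" and K: "part K 0 \<le> 1"
  shows "contains_box K th P \<longleftrightarrow>
    (2 \<le> num_parts K \<and> 2 \<le> part th 0 \<longrightarrow> part th 0 - 1 \<le> part P (num_parts K - 2))"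
proof
  assume box: "contains_box K th P"
  show "2 \<le> num_parts K \<and> 2 \<le> part th 0 \<longrightarrow> part th 0 - 1 \<le> part P (num_parts K - 2)"
  proof
    assume big: "2 \<le> num_parts K \<and> 2 \<le> part th 0"
    obtain w where w: "part w = (\<lambda>j. if j < num_parts K - 1 then part th 0 - 1 else 0)"
      using ex_rectangle by blast
    then have "num_parts w = num_parts K - 1"
      using big by (intro num_parts_rectangle) auto
    then have "\<not> young_le th w" "\<not> young_le K w"
      using th K big by (auto simp: row_le_iff column_le_iff w)
    then have "young_le w P"
      using box by (simp add: contains_box_def)
    then have "part w (num_parts K - 2) \<le> part P (num_parts K - 2)"
      by (simp add: young_le_iff_part)
    moreover have "num_parts K - 2 < num_parts K - 1"
      using big by arith
    ultimately show "part th 0 - 1 \<le> part P (num_parts K - 2)"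
      by (simp add: w)
  qed
next
  assume corner: "2 \<le> num_parts K \<and> 2 \<le> part th 0 \<longrightarrow> part th 0 - 1 \<le> part P (num_parts K - 2)"
  have "part w i \<le> part P i" if w: "\<not> young_le th w" "\<not> young_le K w" and i: "i < num_parts w" for w i
  proof -
    have "part w i < part th 0" "num_parts w < num_parts K"
      using w th K part_antimono[of 0 i w] by (auto simp: row_le_iff column_le_iff)
    moreover have "part P (num_parts K - 2) \<le> part P i"
      using \<open>num_parts w < num_parts K\<close> i by (intro part_antimono) simp
    ultimately show ?thesis
      using corner i by (cases "part th 0 < 2") auto
  qed
  then show "contains_box K th P"
    by (metis contains_box_def young_le_iff_part part_eq_0 not_le zero_le)
qed

definition same_wide_rows ::
    "partition \<Rightarrow> partition \<Rightarrow> partition \<Rightarrow> partition \<Rightarrow> partition \<Rightarrow> bool" where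
  "same_wide_rows D G s2 P r2 \<longleftrightarrow> (\<forall>K. \<not> young_le D K \<longrightarrow> (contains_box K s2 G \<longleftrightarrow> contains_box K r2 P))"

lemma same_wide_rows_iff:
  assumes D: "is_row_two D"
    and s2: "is_row s2" "part s2 0 = n + 2" and r2: "is_row r2" "part r2 0 = r + 2"
  shows "same_wide_rows D G s2 P r2 \<longleftrightarrow> (\<forall>m. n + 1 \<le> part G m \<longleftrightarrow> r + 1 \<le> part P m)"
proof
  assume same: "same_wide_rows D G s2 P r2"
  show "\<forall>m. n + 1 \<le> part G m \<longleftrightarrow> r + 1 \<le> part P m"
  proof
    fix m
    obtain K where K: "part K 0 \<le> 1" "num_parts K = m + 2"
      using ex_column by blast
    then have "contains_box K s2 G \<longleftrightarrow> contains_box K r2 P"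
      using same not_row_two_le_iff[OF D] by (simp add: same_wide_rows_def)
    then show "n + 1 \<le> part G m \<longleftrightarrow> r + 1 \<le> part P m"
      using contains_box_iff[OF s2(1) K(1)] contains_box_iff[OF r2(1) K(1)] K s2 r2 by simp
  qed
next
  assume "\<forall>m. n + 1 \<le> part G m \<longleftrightarrow> r + 1 \<le> part P m"
  then show "same_wide_rows D G s2 P r2"
    using contains_box_iff[OF s2(1)] contains_box_iff[OF r2(1)] s2 r2 not_row_two_le_iff[OF D]
    by (simp add: same_wide_rows_def)
qed

definition next_column :: "partition \<Rightarrow> partition \<Rightarrow> partition \<Rightarrow> bool" where
  "next_column D G K \<longleftrightarrow> \<not> young_le D K \<and> \<not> young_le K G \<and>
     (\<forall>z. \<not> young_le D z \<and> young_le z K \<and> z \<noteq> K \<longrightarrow> young_le z G)"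

lemma next_column_iff:
  assumes D: "is_row_two D"
  shows "next_column D G K \<longleftrightarrow> part K 0 \<le> 1 \<and> num_parts K = Suc (num_parts G)"
proof
  assume K: "next_column D G K"
  then have col: "part K 0 \<le> 1" and longer: "num_parts G < num_parts K"
    using not_row_two_le_iff[OF D] column_le_iff by (auto simp: next_column_def)
  obtain z where z: "part z 0 \<le> 1" "num_parts z = num_parts K - 1"
    using ex_column by blast
  then have "young_le z K" "z \<noteq> K"
    using longer column_le_iff[OF z(1)] column_eq_iff[OF z(1) col] by auto
  then have "young_le z G"
    using K z not_row_two_le_iff[OF D] by (simp add: next_column_def)
  then show "part K 0 \<le> 1 \<and> num_parts K = Suc (num_parts G)"
    using col longer z column_le_iff[OF z(1)] by simp
next
  assume K: "part K 0 \<le> 1 \<and> num_parts K = Suc (num_parts G)"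
  have "young_le z G" if "part z 0 \<le> 1" "young_le z K" "z \<noteq> K" for z
    using that K column_le_iff[OF that(1)] column_eq_iff[OF that(1)] by fastforce
  then show "next_column D G K"
    using K column_le_iff not_row_two_le_iff[OF D] by (auto simp: next_column_def)
qed

definition box_boundary ::
    "partition \<Rightarrow> partition \<Rightarrow> partition \<Rightarrow> partition \<Rightarrow> partition \<Rightarrow> partition \<Rightarrow> bool" where
  "box_boundary D G K1 K2 r1 P \<longleftrightarrow> next_column D G K1 \<and> next_column D K1 K2 \<and>
     contains_box K1 r1 P \<and> \<not> contains_box K2 r1 P"

lemma ex_box_boundary_iff:
  assumes D: "is_row_two D" and r1: "is_row r1" "part r1 0 = Suc r" and r: "1 \<le> r"
  shows "(\<exists>K1 K2. box_boundary D G K1 K2 r1 P) \<longleftrightarrow>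
    (0 < num_parts G \<longrightarrow> r \<le> part P (num_parts G - 1)) \<and> part P (num_parts G) < r"
    (is "_ \<longleftrightarrow> ?corner")
proof -
  have box: "contains_box K1 r1 P \<and> \<not> contains_box K2 r1 P \<longleftrightarrow> ?corner"
    if K: "part K1 0 \<le> 1" "num_parts K1 = Suc (num_parts G)"
      "part K2 0 \<le> 1" "num_parts K2 = Suc (num_parts K1)" for K1 K2
    using K r r1 contains_box_iff[OF r1(1) K(1)] contains_box_iff[OF r1(1) K(3)]
    by (auto simp: Suc_le_eq)
  show ?thesis
  proof
    assume "\<exists>K1 K2. box_boundary D G K1 K2 r1 P"
    then obtain K1 K2 where "box_boundary D G K1 K2 r1 P"
      by blast
    then show ?corner
      using box[of K1 K2] by (simp add: box_boundary_def next_column_iff[OF D])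
  next
    assume ?corner
    obtain K1 K2 where "part K1 0 \<le> 1" "num_parts K1 = Suc (num_parts G)"
        "part K2 0 \<le> 1" "num_parts K2 = Suc (num_parts K1)"
      using ex_column by meson
    then have "box_boundary D G K1 K2 r1 P"
      using box \<open>?corner\<close> by (simp add: box_boundary_def next_column_iff[OF D])
    then show "\<exists>K1 K2. box_boundary D G K1 K2 r1 P"
      by blast
  qed
qed

section \<open>Chains of length two below a partition\<close>

definition unique_between :: "partition \<Rightarrow> partition \<Rightarrow> partition \<Rightarrow> bool" where
  "unique_between u v G \<longleftrightarrow> young_le u v \<and> u \<noteq> v \<and> young_le v G \<and> v \<noteq> G \<and>
     (\<forall>w. young_le u w \<and> u \<noteq> w \<and> young_le w G \<and> w \<noteq> G \<longrightarrow> w = v)"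

definition chains_above :: "partition \<Rightarrow> partition \<Rightarrow> bool" where
  "chains_above T G \<longleftrightarrow> (\<forall>u v. unique_between u v G \<longrightarrow> young_le T u)"

lemma unique_betweenD:
  assumes "unique_between u v G"
  shows "\<forall>j. part u j \<le> part v j" "\<forall>j. part v j \<le> part G j" "part u \<noteq> part v" "part v \<noteq> part G"
    and "\<And>w. \<forall>j. part u j \<le> part w j \<Longrightarrow> \<forall>j. part w j \<le> part G j \<Longrightarrow>
           part u \<noteq> part w \<Longrightarrow> part w \<noteq> part G \<Longrightarrow> w = v"
  using assms by (simp_all add: unique_between_def young_le_iff_part partition_eq_iff_part)

lemma unique_betweenI:
  assumes "\<forall>j. part u j \<le> part v j" "\<forall>j. part v j \<le> part G j" "part u \<noteq> part v" "part v \<noteq> part G"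
    and "\<And>w. \<forall>j. part u j \<le> part w j \<Longrightarrow> \<forall>j. part w j \<le> part G j \<Longrightarrow>
           part u \<noteq> part w \<Longrightarrow> part w \<noteq> part G \<Longrightarrow> part w = part v"
  shows "unique_between u v G"
  unfolding unique_between_def young_le_iff_part partition_eq_iff_part using assms by blast

lemma unique_between_le: "unique_between u v G \<Longrightarrow> part u j \<le> part G j"
  using unique_betweenD(1,2) le_trans by blast

lemma unique_between_neq:
  assumes uvG: "unique_between u v G"
  shows "part u \<noteq> part G"
proof
  assume "part u = part G"
  then have "part v j = part u j" for j
    using unique_betweenD(1,2)[OF uvG] by (metis le_antisym)
  then show False
    using unique_betweenD(3)[OF uvG] by auto
qed

lemma not_unique_between_cell:
  assumes uvG: "unique_between u v G"
  shows "part G \<noteq> (part u)(i := Suc (part u i))"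
proof
  assume G: "part G = (part u)(i := Suc (part u i))"
  have "part v j = part u j" if "j \<noteq> i" for j
    using unique_betweenD(1,2)[OF uvG] that by (metis G fun_upd_other le_antisym)
  moreover have "part v i = part u i \<or> part v i = part G i"
    using unique_betweenD(1,2)[OF uvG] by (metis G fun_upd_same le_SucE le_antisym)
  ultimately have "part v = part u \<or> part v = part G"
    unfolding fun_eq_iff by (metis G fun_upd_other)
  then show False
    using unique_betweenD(3,4)[OF uvG] by simp
qed

lemma unique_between_add_cell:
  assumes uvG: "unique_between u v G" and less: "part u i < part G i"
    and room: "0 < i \<Longrightarrow> part u i < part u (i - 1)"
  shows "part v = (part u)(i := Suc (part u i))"
proof -
  have "\<exists>p. part p = (part u)(i := Suc (part u i))"
    using room part_Suc_le[of u i] by (intro ex_partition_update) (auto simp: Suc_le_eq)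
  then obtain p where p: "part p = (part u)(i := Suc (part u i))" ..
  have "p = v"
  proof (rule unique_betweenD(5)[OF uvG])
    show "\<forall>j. part p j \<le> part G j"
      using unique_between_le[OF uvG] less by (simp add: p Suc_le_eq)
    show "part u \<noteq> part p"
      by (auto simp: p fun_eq_iff)
    show "part p \<noteq> part G"
      using not_unique_between_cell[OF uvG, of i] by (metis p)
  qed (simp add: p)
  then show ?thesis
    using p by simp
qed

lemma unique_between_remove_cell:
  assumes uvG: "unique_between u v G" and less: "part u i < part G i"
    and room: "part G (Suc i) < part G i"
  shows "part v = (part G)(i := part G i - 1)"
proof -
  have "\<exists>p. part p = (part G)(i := part G i - 1)"
    using room part_antimono[of "i - 1" i G] by (intro ex_partition_update) auto
  then obtain p where p: "part p = (part G)(i := part G i - 1)" ..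
  have "p = v"
  proof (rule unique_betweenD(5)[OF uvG])
    show "\<forall>j. part u j \<le> part p j"
      using unique_between_le[OF uvG] less by (simp add: p)
    show "part p \<noteq> part G"
      using less by (auto simp: p fun_eq_iff)
    show "part u \<noteq> part p"
    proof
      assume "part u = part p"
      then have "part G = (part u)(i := Suc (part u i))"
        using less by (auto simp: p fun_eq_iff)
      then show False
        using not_unique_between_cell[OF uvG] by blast
    qed
  qed (simp add: p)
  then show ?thesis
    using p by simp
qed

lemma unique_between_outer_rows:
  assumes uvG: "unique_between u v G"
  obtains i0 i1 where "i0 \<le> i1" "part u i0 < part G i0" "part u i1 < part G i1"
    and "\<And>j. j < i0 \<or> i1 < j \<Longrightarrow> part u j = part G j"
proof -
  define S where "S = {j. part u j < part G j}"
  have "S \<subseteq> {..<num_parts G}"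
    by (auto simp: S_def simp flip: part_pos_iff)
  then have fin: "finite S"
    by (rule finite_subset) simp
  have outside: "part u j = part G j" if "j \<notin> S" for j
    using that unique_between_le[OF uvG, of j] by (simp add: S_def)
  then have "S \<noteq> {}"
    using unique_between_neq[OF uvG] by auto
  show thesis
  proof (rule that[of "Min S" "Max S"])
    show "Min S \<le> Max S" "part u (Min S) < part G (Min S)" "part u (Max S) < part G (Max S)"
      using fin \<open>S \<noteq> {}\<close> Min_in[OF fin] Max_in[OF fin] by (auto simp: S_def)
    show "part u j = part G j" if "j < Min S \<or> Max S < j" for j
      using that Min_le[OF fin, of j] Max_ge[OF fin, of j] by (intro outside) auto
  qed
qed

lemma unique_between_cells:
  assumes uvG: "unique_between u v G"
  obtains i0 i1 where "i0 \<le> i1" "part u i0 < part G i0" "part u i1 < part G i1"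
    "part v = (part u)(i0 := Suc (part u i0))" "part v = (part G)(i1 := part G i1 - 1)"
proof -
  obtain i0 i1 where i01: "i0 \<le> i1" and less0: "part u i0 < part G i0"
    and less1: "part u i1 < part G i1" and outer: "\<And>j. j < i0 \<or> i1 < j \<Longrightarrow> part u j = part G j"
    using unique_between_outer_rows[OF uvG] by blast
  have "part u i0 < part u (i0 - 1)" if "0 < i0"
  proof -
    have "part u (i0 - 1) = part G (i0 - 1)"
      using that by (intro outer) simp
    then show ?thesis
      using less0 part_antimono[of "i0 - 1" i0 G] by simp
  qed
  then have "part v = (part u)(i0 := Suc (part u i0))"
    by (rule unique_between_add_cell[OF uvG less0])
  moreover have "part G (Suc i1) = part u (Suc i1)"
    by (simp add: outer)
  then have "part v = (part G)(i1 := part G i1 - 1)"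
    using less1 part_Suc_le[of u i1] by (intro unique_between_remove_cell[OF uvG less1]) simp
  ultimately show thesis
    using that i01 less0 less1 by blast
qed

text \<open>If the two cells lie in different rows, adding the lower one to u instead would give a
  second partition strictly between u and G, unless it sits right below the upper one.\<close>
lemma unique_between_adjacent_cells:
  assumes uvG: "unique_between u v G" and i01: "i0 < i1" and less1: "part u i1 < part G i1"
    and v0: "part v = (part u)(i0 := Suc (part u i0))" and v1: "part v = (part G)(i1 := part G i1 - 1)"
  shows "i1 = Suc i0 \<and> part u i1 = part u i0"
proof -
  have diff: "((part u)(i0 := Suc (part u i0))) j = ((part G)(i1 := part G i1 - 1)) j" for j
    using v0 v1 by simp
  have G1: "part G i1 = Suc (part u i1)"
    using diff[of i1] i01 less1 by simp
  have flat: "part u i1 = part u (i1 - 1)"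
  proof (rule ccontr)
    assume "part u i1 \<noteq> part u (i1 - 1)"
    then have "part v = (part u)(i1 := Suc (part u i1))"
      using part_antimono[of "i1 - 1" i1 u]
      by (intro unique_between_add_cell[OF uvG less1]) simp
    then show False
      using fun_cong[OF v0, of i0] i01 by simp
  qed
  have "i1 = Suc i0"
  proof (rule ccontr)
    assume "i1 \<noteq> Suc i0"
    then have "i1 - 1 \<noteq> i0" "i1 - 1 \<noteq> i1"
      using i01 by auto
    then have "part u (i1 - 1) = part G (i1 - 1)"
      using diff[of "i1 - 1"] by simp
    then show False
      using part_antimono[of "i1 - 1" i1 G] G1 flat by simp
  qed
  then show ?thesis
    using flat by simp
qed

lemma unique_between_domino:
  assumes uvG: "unique_between u v G"
  obtains (horizontal) i where "2 \<le> part G i" "part u = (part G)(i := part G i - 2)"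
    | (vertical) i where "1 \<le> part G i" "part G (Suc i) = part G i"
      "part u = (part G)(i := part G i - 1, Suc i := part G i - 1)"
proof -
  obtain i0 i1 where i01: "i0 \<le> i1" and less0: "part u i0 < part G i0"
    and less1: "part u i1 < part G i1" and v0: "part v = (part u)(i0 := Suc (part u i0))"
    and v1: "part v = (part G)(i1 := part G i1 - 1)"
    using unique_between_cells[OF uvG] by blast
  have diff: "((part u)(i0 := Suc (part u i0))) j = ((part G)(i1 := part G i1 - 1)) j" for j
    using v0 v1 by simp
  show thesis
  proof (cases "i0 = i1")
    case True
    then have "part G i0 = part u i0 + 2"
      using diff[of i0] less0 by simp
    moreover have "part u j = part G j" if "j \<noteq> i0" for j
      using diff[of j] True that by simp
    ultimately show thesis
      by (intro horizontal[of i0]) (auto simp: fun_eq_iff)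
  next
    case False
    then have "i0 < i1"
      using i01 by simp
    then have adjacent: "i1 = Suc i0" "part u i1 = part u i0"
      using unique_between_adjacent_cells[OF uvG _ less1 v0 v1] by blast+
    have G01: "part G i0 = Suc (part u i0)" "part G i1 = Suc (part u i1)"
      using diff[of i0] diff[of i1] False less1 by auto
    have "1 \<le> part G i0" "part G (Suc i0) = part G i0"
      using G01 adjacent by simp_all
    moreover have "part u = (part G)(i0 := part G i0 - 1, Suc i0 := part G i0 - 1)"
    proof
      fix j
      show "part u j = ((part G)(i0 := part G i0 - 1, Suc i0 := part G i0 - 1)) j"
        using diff[of j] G01 adjacent by (cases "j = i0 \<or> j = Suc i0") auto
    qed
    ultimately show thesis
      by (rule vertical)
  qed
qed

lemma unique_between_lower_part:
  assumes two: "2 \<le> part G i"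
    and u: "part u = (part G)(i := part G i - 2)" and v: "part v = (part G)(i := part G i - 1)"
  shows "unique_between u v G"
proof (rule unique_betweenI)
  show "\<forall>j. part u j \<le> part v j" "\<forall>j. part v j \<le> part G j"
    by (simp_all add: u v)
  show "part u \<noteq> part v" "part v \<noteq> part G"
    using two by (auto simp: u v fun_eq_iff)
next
  fix w
  assume uw: "\<forall>j. part u j \<le> part w j" and wG: "\<forall>j. part w j \<le> part G j"
    and "part u \<noteq> part w" "part w \<noteq> part G"
  have outside: "part w j = part G j" if "j \<noteq> i" for j
    using uw[rule_format, of j] wG[rule_format, of j] that by (simp add: u)
  have "part w i \<noteq> part G i - 2"
  proof
    assume "part w i = part G i - 2"
    then have "part w j = part u j" for j
      using outside[of j] by (cases "j = i") (simp_all add: u)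
    then show False
      using \<open>part u \<noteq> part w\<close> by auto
  qed
  moreover have "part w i \<noteq> part G i"
  proof
    assume "part w i = part G i"
    then have "part w j = part G j" for j
      using outside[of j] by (cases "j = i") simp_all
    then show False
      using \<open>part w \<noteq> part G\<close> by auto
  qed
  ultimately have "part w i = part G i - 1"
    using uw[rule_format, of i] wG[rule_format, of i] by (simp add: u)
  show "part w = part v"
  proof
    fix j
    show "part w j = part v j"
      using outside[of j] \<open>part w i = part G i - 1\<close> by (cases "j = i") (simp_all add: v)
  qed
qed

lemma unique_between_lower_two_parts:
  assumes c: "1 \<le> c" and Gk: "part G k = c" "part G (Suc k) = c"
    and u: "part u = (part G)(k := c - 1, Suc k := c - 1)" and v: "part v = (part G)(Suc k := c - 1)"
  shows "unique_between u v G"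
proof (rule unique_betweenI)
  show "\<forall>j. part u j \<le> part v j" "\<forall>j. part v j \<le> part G j"
    using Gk by (simp_all add: u v)
  show "part u \<noteq> part v" "part v \<noteq> part G"
    using c Gk by (auto simp: u v fun_eq_iff dest: spec[of _ k] spec[of _ "Suc k"])
next
  fix w
  assume uw: "\<forall>j. part u j \<le> part w j" and wG: "\<forall>j. part w j \<le> part G j"
    and "part u \<noteq> part w" "part w \<noteq> part G"
  have outside: "part w j = part G j" if "j \<noteq> k" "j \<noteq> Suc k" for j
    using uw[rule_format, of j] wG[rule_format, of j] that by (simp add: u)
  have ranges: "c - 1 \<le> part w k" "part w k \<le> c" "c - 1 \<le> part w (Suc k)" "part w (Suc k) \<le> c"
    using uw[rule_format, of k] wG[rule_format, of k] uw[rule_format, of "Suc k"]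
      wG[rule_format, of "Suc k"] Gk by (simp_all add: u)
  have "part w k \<noteq> c - 1 \<or> part w (Suc k) \<noteq> c - 1"
  proof (rule ccontr)
    assume "\<not> ?thesis"
    then have "part w j = part u j" for j
      using outside[of j] by (cases "j = k \<or> j = Suc k") (auto simp: u)
    then show False
      using \<open>part u \<noteq> part w\<close> by auto
  qed
  moreover have "part w k \<noteq> c \<or> part w (Suc k) \<noteq> c"
  proof (rule ccontr)
    assume "\<not> ?thesis"
    then have "part w j = part G j" for j
      using outside[of j] Gk by (cases "j = k \<or> j = Suc k") auto
    then show False
      using \<open>part w \<noteq> part G\<close> by auto
  qed
  moreover have "part w (Suc k) \<le> part w k"
    by (rule part_Suc_le)
  ultimately have "part w k = c" "part w (Suc k) = c - 1"
    using ranges c by auto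
  then show "part w = part v"
    using outside Gk by (intro ext) (metis v fun_upd_apply)
qed

lemma chains_above_no_wide_step:
  assumes chains: "chains_above T G" and T: "part T = (\<lambda>i. min (part G i) n)"
    and G0: "part G 0 \<le> n + 1"
  shows "part G i \<le> Suc (part G (Suc i))"
proof (rule ccontr)
  assume "\<not> ?thesis"
  then have gap: "part G (Suc i) + 2 \<le> part G i"
    by simp
  have "\<exists>p. part p = (part G)(i := part G i - 2)" "\<exists>p. part p = (part G)(i := part G i - 1)"
    by (rule ex_partition_update, use gap part_antimono[of "i - 1" i G] in auto)+
  then obtain u v where u: "part u = (part G)(i := part G i - 2)"
    and v: "part v = (part G)(i := part G i - 1)"
    by blast
  have "unique_between u v G"
    using gap u v by (intro unique_between_lower_part) simp_all
  then have "young_le T u"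
    using chains unfolding chains_above_def by blast
  then have "part T i \<le> part u i"
    by (simp add: young_le_iff_part)
  moreover have "part G i \<le> n + 1"
    using G0 part_antimono[of 0 i G] by simp
  ultimately show False
    using gap by (simp add: T u)
qed

text \<open>For a flat step with parts c \<le> n, lowering the last two rows of length c gives a chain
  below G whose removed cells lie inside the truncation.\<close>
lemma chains_above_no_tall_step:
  assumes chains: "chains_above T G" and T: "part T = (\<lambda>i. min (part G i) n)"
    and G0: "part G 0 \<le> n + 1" and flat: "part G (Suc i) = part G i" and pos: "1 \<le> part G i"
  shows "part G i = n + 1"
proof (rule ccontr)
  assume "part G i \<noteq> n + 1"
  define c where "c = part G i"
  have c: "1 \<le> c" "c \<le> n"
    using pos G0 part_antimono[of 0 i G] \<open>part G i \<noteq> n + 1\<close> by (auto simp: c_def)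
  define k where "k = Max {j. part G j = c} - 1"
  have "{j. part G j = c} \<subseteq> {..<num_parts G}"
    using c by (auto simp flip: part_pos_iff)
  then have fin: "finite {j. part G j = c}"
    by (rule finite_subset) simp
  have "i \<le> k" and Gk1: "part G (Suc k) = c"
    using Max_ge[OF fin, of "Suc i"] Max_in[OF fin] flat by (auto simp: k_def c_def)
  have Gk: "part G k = c"
    using part_antimono[of i k G] part_Suc_le[of G k] \<open>i \<le> k\<close> Gk1 by (simp add: c_def)
  have "part G (Suc (Suc k)) \<noteq> c"
    using Max_ge[OF fin, of "Suc (Suc k)"] \<open>i \<le> k\<close> by (auto simp: k_def)
  then have below: "part G (Suc (Suc k)) < c"
    using part_Suc_le[of G "Suc k"] Gk1 by simp
  have "\<exists>p. part p = (part G)(Suc k := c - 1)"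
    by (rule ex_partition_update) (use below Gk in auto)
  then obtain v where v: "part v = (part G)(Suc k := c - 1)" ..
  have "\<exists>p. part p = (part v)(k := c - 1)"
    by (rule ex_partition_update)
      (use Gk part_antimono[of "k - 1" k G, OF diff_le_self] in \<open>auto simp: v\<close>)
  then obtain u where u: "part u = (part G)(k := c - 1, Suc k := c - 1)"
    by (auto simp: v fun_upd_twist)
  have "unique_between u v G"
    using c(1) Gk Gk1 u v by (rule unique_between_lower_two_parts)
  then have "young_le T u"
    using chains unfolding chains_above_def by blast
  then have "part T k \<le> part u k"
    by (simp add: young_le_iff_part)
  then show False
    using c Gk by (simp add: T u)
qed

text \<open>a rows of length n + 1 followed by rows of lengths n, n - 1, ..., 1
  (truncated subtraction makes the remaining parts 0).\<close>
definition staircase :: "nat \<Rightarrow> nat \<Rightarrow> nat \<Rightarrow> nat" where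
  "staircase n a i = (if i < a then n + 1 else n + a - i)"

lemma ex_staircase: "\<exists>G. part G = staircase n a"
  by (rule ex_partition_parts[of _ "a + n"]) (auto simp: staircase_def)

lemma num_parts_staircase: "part G = staircase n a \<Longrightarrow> num_parts G = a + n"
  by (rule num_parts_eqI) (auto simp: staircase_def)

lemma Suc_le_staircase_iff: "Suc n \<le> staircase n a m \<longleftrightarrow> m < a"
  by (simp add: staircase_def) arith

lemma chains_above_imp_staircase:
  assumes chains: "chains_above T G" and T: "part T = (\<lambda>i. min (part G i) n)"
    and G0: "n \<le> part G 0" "part G 0 \<le> n + 1"
  shows "\<exists>a. part G = staircase n a"
proof -
  have ex: "\<exists>i. part G i \<le> n"
    using part_eq_0[of G "num_parts G"] by (intro exI[of _ "num_parts G"]) simp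
  define a where "a = (LEAST i. part G i \<le> n)"
  have top: "part G i = n + 1" if "i < a" for i
    using not_less_Least[of i "\<lambda>i. part G i \<le> n"] that part_antimono[of 0 i G] G0
    by (simp add: a_def)
  have "part G a \<le> n"
    unfolding a_def by (rule LeastI_ex[OF ex])
  moreover have "n \<le> part G a"
  proof (cases a)
    case (Suc b)
    then show ?thesis
      using top[of b] chains_above_no_wide_step[OF chains T G0(2), of b] by simp
  qed (use G0 in simp)
  ultimately have Ga: "part G a = n"
    by simp
  have steps: "part G (a + k) = n - k" for k
  proof (induction k)
    case (Suc k)
    have "part G (a + Suc k) \<noteq> part G (a + k)" if "0 < n - k"
    proof
      assume "part G (a + Suc k) = part G (a + k)"
      then have "part G (a + k) = n + 1"
        using that Suc.IH by (intro chains_above_no_tall_step[OF chains T G0(2)]) simp_all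
      then show False
        using Suc.IH by simp
    qed
    then show ?case
      using Suc.IH chains_above_no_wide_step[OF chains T G0(2), of "a + k"]
        part_Suc_le[of G "a + k"] by (cases "n - k") auto
  qed (simp add: Ga)
  have "part G i = staircase n a i" for i
  proof (cases "i < a")
    case False
    then show ?thesis
      using steps[of "i - a"] by (simp add: staircase_def)
  qed (simp add: top staircase_def)
  then show ?thesis
    by blast
qed

lemma staircase_imp_chains_above:
  assumes G: "part G = staircase n a" and T: "part T = (\<lambda>i. min (part G i) n)"
  shows "chains_above T G"
  unfolding chains_above_def
proof (intro allI impI)
  fix u v
  assume "unique_between u v G"
  then show "young_le T u"
  proof (cases rule: unique_between_domino)
    case (horizontal i)
    then have "part G (Suc i) + 2 \<le> part G i"
      using part_Suc_le[of u i] by (simp split: if_splits)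
    then show ?thesis
      by (auto simp: G staircase_def split: if_splits)
  next
    case (vertical i)
    then have "Suc i < a"
      by (auto simp: G staircase_def split: if_splits)
    then have "part T j \<le> part u j" for j
      using vertical(3) by (simp add: T G staircase_def)
    then show ?thesis
      by (simp add: young_le_iff_part)
  qed
qed

lemma ex_parts_at_least: "0 < k \<Longrightarrow> \<exists>c. \<forall>i. k \<le> part P i \<longleftrightarrow> i < c"
proof -
  assume "0 < k"
  then have ex: "\<exists>i. part P i < k"
    using part_eq_0[of P "num_parts P"] by (intro exI[of _ "num_parts P"]) simp
  define c where "c = (LEAST i. part P i < k)"
  have "k \<le> part P i \<longleftrightarrow> i < c" for i
  proof
    assume "k \<le> part P i"
    show "i < c"
    proof (rule ccontr)
      assume "\<not> i < c"
      then have "part P i \<le> part P c"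
        by (simp add: part_antimono)
      then show False
        using \<open>k \<le> part P i\<close> LeastI_ex[OF ex] by (simp add: c_def)
    qed
  qed (use not_less_Least[of i "\<lambda>i. part P i < k"] c_def in auto)
  then show ?thesis
    by blast
qed

lemma mult_part_eq_iff:
  assumes r: "1 \<le> r" and n: "1 \<le> n" and wide: "\<And>m. m < a \<longleftrightarrow> r + 1 \<le> part P m"
  shows "mult_part r P = n \<longleftrightarrow> r \<le> part P (a + n - 1) \<and> part P (a + n) < r"
proof -
  obtain c where c: "\<And>i. r \<le> part P i \<longleftrightarrow> i < c"
    using ex_parts_at_least[of r P] r by auto
  have "part P i = r \<longleftrightarrow> a \<le> i \<and> i < c" for i
    using wide[of i] c[of i] by auto
  then have "{i. part P i = r} = {a..<c}"
    by (simp only: set_eq_iff mem_Collect_eq atLeastLessThan_iff) simp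
  then have "mult_part r P = c - a"
    using r by (simp add: mult_part_eq_card)
  moreover have "a \<le> c"
  proof (rule ccontr)
    assume "\<not> a \<le> c"
    then have "r + 1 \<le> part P c"
      using wide[of c] by simp
    then show False
      using c[of c] by simp
  qed
  ultimately show ?thesis
    using c[of "a + n - 1"] c[of "a + n"] n by auto
qed

lemma box_boundary_staircase_iff:
  assumes r: "1 \<le> r" and n: "1 \<le> n" and D: "is_row_two D"
    and r1: "is_row r1" "part r1 0 = Suc r" and G: "part G = staircase n a"
    and wide: "\<And>m. m < a \<longleftrightarrow> r + 1 \<le> part P m"
  shows "(\<exists>K1 K2. box_boundary D G K1 K2 r1 P) \<longleftrightarrow> mult_part r P = n"
proof -
  have "num_parts G = a + n" "0 < num_parts G"
    using num_parts_staircase[OF G] n by simp_all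
  then show ?thesis
    using ex_box_boundary_iff[OF D r1 r, of G P] mult_part_eq_iff[OF r n wide] by simp
qed

text \<open>For \<rho> = [r] and \<sigma> = [n] the hypotheses force \<rho>1, \<rho>2, \<sigma>1, \<sigma>2, D to be the rows
  [r + 1], [r + 2], [n + 1], [n + 2], [2], T to be G cut to width n, and G to be the
  staircase with one row of length n + 1 for each part of \<pi> exceeding r.\<close>
definition counts_parts :: "partition \<Rightarrow> partition \<Rightarrow> partition \<Rightarrow> bool" where
  "counts_parts \<rho> \<sigma> \<pi> \<longleftrightarrow> is_row \<rho> \<and> (\<exists>y. \<not> young_le \<rho> y) \<and> is_row \<sigma> \<and> (\<exists>y. \<not> young_le \<sigma> y) \<and>
    (\<forall>\<rho>1 \<rho>2 \<sigma>1 \<sigma>2 D G T. next_row \<rho> \<rho>1 \<and> next_row \<rho>1 \<rho>2 \<and> next_row \<sigma> \<sigma>1 \<and> next_row \<sigma>1 \<sigma>2 \<and>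
       is_row_two D \<and> truncation G \<sigma>1 T \<and> young_le \<sigma> G \<and> \<not> young_le \<sigma>2 G \<and>
       chains_above T G \<and> same_wide_rows D G \<sigma>2 \<pi> \<rho>2 \<longrightarrow>
       (\<exists>K1 K2. box_boundary D G K1 K2 \<rho>1 \<pi>))"

lemma counts_parts_if_mult_part:
  assumes n: "1 \<le> n" and r: "1 \<le> r" and \<sigma>: "\<sigma> = single n" and \<rho>: "\<rho> = single r"
    and mult: "mult_part r \<pi> = n"
  shows "counts_parts \<rho> \<sigma> \<pi>"
proof -
  have "\<exists>K1 K2. box_boundary D G K1 K2 \<rho>1 \<pi>"
    if hyps: "next_row \<rho> \<rho>1" "next_row \<rho>1 \<rho>2" "next_row \<sigma> \<sigma>1" "next_row \<sigma>1 \<sigma>2" "is_row_two D"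
       "truncation G \<sigma>1 T" "young_le \<sigma> G" "\<not> young_le \<sigma>2 G" "chains_above T G"
       "same_wide_rows D G \<sigma>2 \<pi> \<rho>2"
    for \<rho>1 \<rho>2 \<sigma>1 \<sigma>2 D G T
  proof -
    have \<rho>12: "is_row \<rho>1" "part \<rho>1 0 = Suc r" "is_row \<rho>2" "part \<rho>2 0 = r + 2"
      using hyps(1,2) next_row_iff is_row_single[OF r] by (auto simp: \<rho>)
    have \<sigma>12: "is_row \<sigma>1" "part \<sigma>1 0 = n + 1" "is_row \<sigma>2" "part \<sigma>2 0 = n + 2"
      using hyps(3,4) next_row_iff is_row_single[OF n] by (auto simp: \<sigma>)
    have T: "part T = (\<lambda>i. min (part G i) n)"
      using hyps(6) truncation_iff[of \<sigma>1 G T] \<sigma>12 by simp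
    have "n \<le> part G 0" "part G 0 \<le> n + 1"
      using hyps(7,8) is_row_single[OF n] \<sigma>12 row_le_iff by (auto simp: \<sigma>)
    then obtain a where G: "part G = staircase n a"
      using chains_above_imp_staircase[OF hyps(9) T] by blast
    have "m < a \<longleftrightarrow> r + 1 \<le> part \<pi> m" for m
      using hyps(10) same_wide_rows_iff[OF hyps(5) \<sigma>12(3,4) \<rho>12(3,4)]
      by (simp add: G Suc_le_staircase_iff)
    then show ?thesis
      using box_boundary_staircase_iff[OF r n hyps(5) \<rho>12(1,2) G] mult by blast
  qed
  moreover have "is_row \<rho> \<and> (\<exists>y. \<not> young_le \<rho> y)" "is_row \<sigma> \<and> (\<exists>y. \<not> young_le \<sigma> y)"
    using nonempty_row_iff_single n r \<rho> \<sigma> by blast+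
  ultimately show ?thesis
    unfolding counts_parts_def by blast
qed

lemma mult_part_if_counts_parts:
  assumes counts: "counts_parts \<rho> \<sigma> \<pi>"
  shows "\<exists>n r. 1 \<le> n \<and> 1 \<le> r \<and> \<sigma> = single n \<and> \<rho> = single r \<and> mult_part r \<pi> = n"
proof -
  obtain r where r: "1 \<le> r" "\<rho> = single r"
    using counts nonempty_row_iff_single[of \<rho>] by (auto simp: counts_parts_def)
  obtain n where n: "1 \<le> n" "\<sigma> = single n"
    using counts nonempty_row_iff_single[of \<sigma>] by (auto simp: counts_parts_def)
  obtain \<rho>1 \<rho>2 \<sigma>1 \<sigma>2 D where
    rows: "is_row \<rho>1" "part \<rho>1 0 = Suc r" "is_row \<rho>2" "part \<rho>2 0 = r + 2"
      "is_row \<sigma>1" "part \<sigma>1 0 = n + 1" "is_row \<sigma>2" "part \<sigma>2 0 = n + 2"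
      "is_row D" "part D 0 = 2"
    using ex_row by meson
  obtain a where wide: "\<And>m. m < a \<longleftrightarrow> r + 1 \<le> part \<pi> m"
    using ex_parts_at_least[of "r + 1" \<pi>] by auto
  obtain G where G: "part G = staircase n a"
    using ex_staircase by blast
  have "min (part G (Suc i)) n \<le> min (part G i) n" for i
    using part_Suc_le[of G i] by (rule min.mono) simp
  then have "\<exists>T. part T = (\<lambda>i. min (part G i) n)"
    using part_eq_0[of G] by (intro ex_partition_parts[of _ "num_parts G"]) auto
  then obtain T where T: "part T = (\<lambda>i. min (part G i) n)" ..
  have D: "is_row_two D"
    using rows by (simp add: is_row_two_iff)
  have "next_row \<rho> \<rho>1" "next_row \<rho>1 \<rho>2" "next_row \<sigma> \<sigma>1" "next_row \<sigma>1 \<sigma>2"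
    using rows next_row_iff is_row_single r n by auto
  moreover have "truncation G \<sigma>1 T"
    using truncation_iff[of \<sigma>1 G T] rows T by simp
  moreover have "young_le \<sigma> G" "\<not> young_le \<sigma>2 G"
    using rows is_row_single[OF n(1)] row_le_iff n by (auto simp: G staircase_def)
  moreover have "chains_above T G"
    by (rule staircase_imp_chains_above[OF G T])
  moreover have "same_wide_rows D G \<sigma>2 \<pi> \<rho>2"
    using same_wide_rows_iff[OF D rows(7,8,3,4)] wide by (simp add: G Suc_le_staircase_iff)
  ultimately have "\<exists>K1 K2. box_boundary D G K1 K2 \<rho>1 \<pi>"
    using counts D unfolding counts_parts_def by blast
  then show ?thesis
    using box_boundary_staircase_iff[OF r(1) n(1) D rows(1,2) G wide] r n by blast
qed

lemma counts_parts_iff: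
  "counts_parts \<rho> \<sigma> \<pi> \<longleftrightarrow>
    (\<exists>n r. 1 \<le> n \<and> 1 \<le> r \<and> \<sigma> = single n \<and> \<rho> = single r \<and> mult_part r \<pi> = n)"
  using counts_parts_if_mult_part mult_part_if_counts_parts by metis

section \<open>Prenex formulas\<close>

fun trm_vars :: "trm \<Rightarrow> nat set" where
  "trm_vars (V x) = {x}"
| "trm_vars C = {}"

fun free_vars :: "fm \<Rightarrow> nat set" where
  "free_vars (Le s t) = trm_vars s \<union> trm_vars t"
| "free_vars (Eq s t) = trm_vars s \<union> trm_vars t"
| "free_vars Tru = {}"
| "free_vars Fls = {}"
| "free_vars (Neg f) = free_vars f"
| "free_vars (Conj f g) = free_vars f \<union> free_vars g"
| "free_vars (Disj f g) = free_vars f \<union> free_vars g"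
| "free_vars (Ex x f) = free_vars f - {x}"
| "free_vars (All x f) = free_vars f - {x}"

lemma tval_cong: "(\<And>x. x \<in> trm_vars t \<Longrightarrow> e x = e' x) \<Longrightarrow> tval e t = tval e' t"
  by (cases t) simp_all

lemma sat_cong: "(\<And>x. x \<in> free_vars f \<Longrightarrow> e x = e' x) \<Longrightarrow> sat f e \<longleftrightarrow> sat f e'"
proof (induction f arbitrary: e e')
  case (Le s t)
  then show ?case
    using tval_cong[of s e e'] tval_cong[of t e e'] by simp
next
  case (Eq s t)
  then show ?case
    using tval_cong[of s e e'] tval_cong[of t e e'] by simp
next
  case (Neg f)
  have "sat f e \<longleftrightarrow> sat f e'"
    by (rule Neg.IH) (use Neg.prems in simp)
  then show ?case
    by simp
next
  case (Conj f g)
  have "sat f e \<longleftrightarrow> sat f e'" "sat g e \<longleftrightarrow> sat g e'"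
    by (rule Conj.IH; use Conj.prems in simp)+
  then show ?case
    by simp
next
  case (Disj f g)
  have "sat f e \<longleftrightarrow> sat f e'" "sat g e \<longleftrightarrow> sat g e'"
    by (rule Disj.IH; use Disj.prems in simp)+
  then show ?case
    by simp
next
  case (Ex x f)
  have "sat f (e(x := p)) \<longleftrightarrow> sat f (e'(x := p))" for p
    by (rule Ex.IH) (use Ex.prems in auto)
  then show ?case
    by simp
next
  case (All x f)
  have "sat f (e(x := p)) \<longleftrightarrow> sat f (e'(x := p))" for p
    by (rule All.IH) (use All.prems in auto)
  then show ?case
    by simp
qed simp_all

lemma sat_upd_fresh: "x \<notin> free_vars f \<Longrightarrow> sat f (e(x := p)) \<longleftrightarrow> sat f e"
  by (rule sat_cong) auto

lemma free_vars_allblock [simp]: "free_vars (allblock xs f) = free_vars f - set xs"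
  by (induction xs) auto

lemma free_vars_exblock [simp]: "free_vars (exblock xs f) = free_vars f - set xs"
  by (induction xs) auto

lemma sat_allblock_cong: "(\<And>e. sat f e \<longleftrightarrow> sat g e) \<Longrightarrow> sat (allblock xs f) e \<longleftrightarrow> sat (allblock xs g) e"
  by (induction xs arbitrary: e) simp_all

lemma sat_exblock_cong: "(\<And>e. sat f e \<longleftrightarrow> sat g e) \<Longrightarrow> sat (exblock xs f) e \<longleftrightarrow> sat (exblock xs g) e"
  by (induction xs arbitrary: e) simp_all

lemma sat_allblock_pull:
  assumes "set xs \<inter> free_vars g = {}"
  shows "sat (allblock xs (Conj f g)) e \<longleftrightarrow> sat (Conj (allblock xs f) g) e"
    and "sat (allblock xs (Disj f g)) e \<longleftrightarrow> sat (Disj (allblock xs f) g) e"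
    and "sat (allblock xs (Conj g f)) e \<longleftrightarrow> sat (Conj g (allblock xs f)) e"
    and "sat (allblock xs (Disj g f)) e \<longleftrightarrow> sat (Disj g (allblock xs f)) e"
  using assms by (induction xs arbitrary: e) (simp_all add: sat_upd_fresh)

lemma sat_exblock_pull:
  assumes "set xs \<inter> free_vars g = {}"
  shows "sat (exblock xs (Conj f g)) e \<longleftrightarrow> sat (Conj (exblock xs f) g) e"
    and "sat (exblock xs (Disj f g)) e \<longleftrightarrow> sat (Disj (exblock xs f) g) e"
    and "sat (exblock xs (Conj g f)) e \<longleftrightarrow> sat (Conj g (exblock xs f)) e"
    and "sat (exblock xs (Disj g f)) e \<longleftrightarrow> sat (Disj g (exblock xs f)) e"
  using assms by (induction xs arbitrary: e) (simp_all add: sat_upd_fresh)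

lemma allblock_append: "allblock (xs @ ys) f = allblock xs (allblock ys f)"
  by (induction xs) simp_all

lemma exblock_append: "exblock (xs @ ys) f = exblock xs (exblock ys f)"
  by (induction xs) simp_all

type_synonym prenex = "nat list \<times> nat list \<times> fm"

definition ex_all :: "prenex \<Rightarrow> fm" where
  "ex_all P = (case P of (ys, zs, M) \<Rightarrow> exblock ys (allblock zs M))"

definition conj_prenex :: "prenex \<Rightarrow> prenex \<Rightarrow> prenex" where
  "conj_prenex P P' = (case (P, P') of ((ys, zs, M), (ys', zs', M')) \<Rightarrow> (ys @ ys', zs @ zs', Conj M M'))"

definition disj_prenex :: "prenex \<Rightarrow> prenex \<Rightarrow> prenex" where
  "disj_prenex P P' = (case (P, P') of ((ys, zs, M), (ys', zs', M')) \<Rightarrow> (ys @ ys', zs @ zs', Disj M M'))"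

fun bound_vars :: "prenex \<Rightarrow> nat set" where
  "bound_vars (ys, zs, M) = set ys \<union> set zs"

fun matrix_vars :: "prenex \<Rightarrow> nat set" where
  "matrix_vars (ys, zs, M) = free_vars M"

definition separated :: "prenex \<Rightarrow> prenex \<Rightarrow> bool" where
  "separated P P' \<longleftrightarrow> matrix_vars P \<inter> bound_vars P' = {} \<and> matrix_vars P' \<inter> bound_vars P = {}"

lemma prenex_vars_conj_disj [simp]:
  "bound_vars (conj_prenex P P') = bound_vars P \<union> bound_vars P'"
  "bound_vars (disj_prenex P P') = bound_vars P \<union> bound_vars P'"
  "matrix_vars (conj_prenex P P') = matrix_vars P \<union> matrix_vars P'"
  "matrix_vars (disj_prenex P P') = matrix_vars P \<union> matrix_vars P'"
  by (cases P, cases P', auto simp: conj_prenex_def disj_prenex_def)+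

lemma sat_conj_prenex:
  assumes "separated P P'"
  shows "sat (ex_all (conj_prenex P P')) e \<longleftrightarrow> sat (ex_all P) e \<and> sat (ex_all P') e"
proof -
  obtain ys zs M ys' zs' M' where P: "P = (ys, zs, M)" and P': "P' = (ys', zs', M')"
    by (cases P, cases P')
  have sep: "set zs' \<inter> free_vars M = {}" "set zs \<inter> free_vars (allblock zs' M') = {}"
      "set ys' \<inter> free_vars (allblock zs M) = {}" "set ys \<inter> free_vars (exblock ys' (allblock zs' M')) = {}"
    using assms by (auto simp: separated_def P P')
  have "sat (ex_all (conj_prenex P P')) e \<longleftrightarrow>
      sat (exblock ys (exblock ys' (allblock zs (allblock zs' (Conj M M'))))) e"
    by (simp add: ex_all_def conj_prenex_def P P' exblock_append allblock_append)
  also have "\<dots> \<longleftrightarrow> sat (exblock ys (exblock ys' (allblock zs (Conj M (allblock zs' M'))))) e"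
    by (intro sat_exblock_cong sat_allblock_cong sat_allblock_pull(3)[OF sep(1)])
  also have "\<dots> \<longleftrightarrow> sat (exblock ys (exblock ys' (Conj (allblock zs M) (allblock zs' M')))) e"
    by (intro sat_exblock_cong sat_allblock_pull(1)[OF sep(2)])
  also have "\<dots> \<longleftrightarrow> sat (exblock ys (Conj (allblock zs M) (exblock ys' (allblock zs' M')))) e"
    by (intro sat_exblock_cong sat_exblock_pull(3)[OF sep(3)])
  also have "\<dots> \<longleftrightarrow> sat (Conj (exblock ys (allblock zs M)) (exblock ys' (allblock zs' M'))) e"
    by (rule sat_exblock_pull(1)[OF sep(4)])
  finally show ?thesis
    by (simp add: ex_all_def P P')
qed

lemma sat_disj_prenex:
  assumes "separated P P'"
  shows "sat (ex_all (disj_prenex P P')) e \<longleftrightarrow> sat (ex_all P) e \<or> sat (ex_all P') e"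
proof -
  obtain ys zs M ys' zs' M' where P: "P = (ys, zs, M)" and P': "P' = (ys', zs', M')"
    by (cases P, cases P')
  have sep: "set zs' \<inter> free_vars M = {}" "set zs \<inter> free_vars (allblock zs' M') = {}"
      "set ys' \<inter> free_vars (allblock zs M) = {}" "set ys \<inter> free_vars (exblock ys' (allblock zs' M')) = {}"
    using assms by (auto simp: separated_def P P')
  have "sat (ex_all (disj_prenex P P')) e \<longleftrightarrow>
      sat (exblock ys (exblock ys' (allblock zs (allblock zs' (Disj M M'))))) e"
    by (simp add: ex_all_def disj_prenex_def P P' exblock_append allblock_append)
  also have "\<dots> \<longleftrightarrow> sat (exblock ys (exblock ys' (allblock zs (Disj M (allblock zs' M'))))) e"
    by (intro sat_exblock_cong sat_allblock_cong sat_allblock_pull(4)[OF sep(1)])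
  also have "\<dots> \<longleftrightarrow> sat (exblock ys (exblock ys' (Disj (allblock zs M) (allblock zs' M')))) e"
    by (intro sat_exblock_cong sat_allblock_pull(2)[OF sep(2)])
  also have "\<dots> \<longleftrightarrow> sat (exblock ys (Disj (allblock zs M) (exblock ys' (allblock zs' M')))) e"
    by (intro sat_exblock_cong sat_exblock_pull(4)[OF sep(3)])
  also have "\<dots> \<longleftrightarrow> sat (Disj (exblock ys (allblock zs M)) (exblock ys' (allblock zs' M'))) e"
    by (rule sat_exblock_pull(2)[OF sep(4)])
  finally show ?thesis
    by (simp add: ex_all_def P P')
qed

fun qf_prenex :: "prenex \<Rightarrow> bool" where
  "qf_prenex (ys, zs, M) = qf M"

lemma qf_prenex_conj_disj [simp]:
  "qf_prenex (conj_prenex P P') \<longleftrightarrow> qf_prenex P \<and> qf_prenex P'"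
  "qf_prenex (disj_prenex P P') \<longleftrightarrow> qf_prenex P \<and> qf_prenex P'"
  by (cases P, cases P', simp add: conj_prenex_def disj_prenex_def)+

lemma is_Pi3_allblock_ex_all: "qf_prenex P \<Longrightarrow> is_Pi 3 (allblock xs (ex_all P))"
  by (cases P) (simp add: ex_all_def numeral_3_eq_3, blast)

section \<open>The defining formula\<close>

abbreviation le_fm :: "nat \<Rightarrow> nat \<Rightarrow> fm" where
  "le_fm x y \<equiv> Le (V x) (V y)"

abbreviation neq_fm :: "nat \<Rightarrow> nat \<Rightarrow> fm" where
  "neq_fm x y \<equiv> Neg (Eq (V x) (V y))"

abbreviation imp_fm :: "fm \<Rightarrow> fm \<Rightarrow> fm" where
  "imp_fm f g \<equiv> Disj (Neg f) g"

abbreviation row_fm :: "nat \<Rightarrow> fm" where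
  "row_fm x \<equiv> Neg (Le C (V x))"

abbreviation next_row_fm :: "nat \<Rightarrow> nat \<Rightarrow> nat \<Rightarrow> fm" where
  "next_row_fm t t' z \<equiv> Conj (row_fm t') (Conj (le_fm t t') (Conj (neq_fm t t')
     (imp_fm (Conj (row_fm z) (Conj (le_fm t z) (neq_fm t z))) (le_fm t' z))))"

lemma sat_not_next_row:
  assumes "distinct [t, t', z]"
  shows "sat (ex_all ([z], [], Neg (next_row_fm t t' z))) e \<longleftrightarrow> \<not> next_row (e t) (e t')"
  using assms by (auto simp: ex_all_def next_row_def is_row_def)

lemma sat_nonempty_row:
  assumes "x \<noteq> y"
  shows "sat (ex_all ([y], [], Conj (row_fm x) (Neg (le_fm x y)))) e \<longleftrightarrow>
    is_row (e x) \<and> (\<exists>q. \<not> young_le (e x) q)"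
  using assms by (auto simp: ex_all_def is_row_def)

abbreviation row_two_fm :: "nat \<Rightarrow> nat \<Rightarrow> fm" where
  "row_two_fm d z \<equiv> Conj (row_fm d) (Conj (Neg (Le (V d) C))
     (imp_fm (Conj (row_fm z) (Neg (Le (V z) C))) (le_fm d z)))"

lemma sat_not_row_two:
  assumes "d \<noteq> z"
  shows "sat (ex_all ([z], [], Neg (row_two_fm d z))) e \<longleftrightarrow> \<not> is_row_two (e d)"
  using assms by (auto simp: ex_all_def is_row_two_def is_row_def)

abbreviation truncation_fm :: "nat \<Rightarrow> nat \<Rightarrow> nat \<Rightarrow> nat \<Rightarrow> fm" where
  "truncation_fm g th t w \<equiv> Conj (le_fm t g) (Conj (Neg (le_fm th t))
     (imp_fm (Conj (le_fm w g) (Neg (le_fm w t))) (le_fm th w)))"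

lemma sat_not_truncation:
  assumes "distinct [g, th, t, w]"
  shows "sat (ex_all ([w], [], Neg (truncation_fm g th t w))) e \<longleftrightarrow> \<not> truncation (e g) (e th) (e t)"
  using assms by (auto simp: ex_all_def truncation_def)

abbreviation unique_between_fm :: "nat \<Rightarrow> nat \<Rightarrow> nat \<Rightarrow> nat \<Rightarrow> fm" where
  "unique_between_fm u v g w \<equiv> Conj (le_fm u v) (Conj (neq_fm u v) (Conj (le_fm v g) (Conj (neq_fm v g)
     (imp_fm (Conj (le_fm u w) (Conj (neq_fm u w) (Conj (le_fm w g) (neq_fm w g)))) (Eq (V w) (V v))))))"

lemma sat_not_chains_above:
  assumes "distinct [t, g, u, v, w]"
  shows "sat (ex_all ([u, v], [w], Conj (unique_between_fm u v g w) (Neg (le_fm t u)))) e \<longleftrightarrow>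
    \<not> chains_above (e t) (e g)"
  using assms by (auto simp: ex_all_def chains_above_def unique_between_def)

abbreviation box_fm :: "nat \<Rightarrow> nat \<Rightarrow> nat \<Rightarrow> nat \<Rightarrow> fm" where
  "box_fm k th p w \<equiv> imp_fm (Conj (Neg (le_fm th w)) (Neg (le_fm k w))) (le_fm w p)"

lemma sat_not_same_wide_rows:
  assumes "distinct [d, g, s2, p, r2, k, w, w1, w2]"
  shows "sat (ex_all ([k, w], [w1, w2], Conj (Neg (le_fm d k))
      (Disj (Conj (box_fm k s2 g w1) (Neg (box_fm k r2 p w)))
            (Conj (Neg (box_fm k s2 g w)) (box_fm k r2 p w2))))) e \<longleftrightarrow>
    \<not> same_wide_rows (e d) (e g) (e s2) (e p) (e r2)"
proof -
  have "sat (ex_all ([k, w], [w1, w2], Conj (Neg (le_fm d k))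
      (Disj (Conj (box_fm k s2 g w1) (Neg (box_fm k r2 p w)))
            (Conj (Neg (box_fm k s2 g w)) (box_fm k r2 p w2))))) e \<longleftrightarrow>
    (\<exists>K. \<not> young_le (e d) K \<and>
      (contains_box K (e s2) (e g) \<and> \<not> contains_box K (e r2) (e p) \<or>
       \<not> contains_box K (e s2) (e g) \<and> contains_box K (e r2) (e p)))"
    using assms by (auto simp: ex_all_def contains_box_def)
  then show ?thesis
    by (auto simp: same_wide_rows_def)
qed

abbreviation next_column_fm :: "nat \<Rightarrow> nat \<Rightarrow> nat \<Rightarrow> nat \<Rightarrow> fm" where
  "next_column_fm d g k z \<equiv> Conj (Neg (le_fm d k)) (Conj (Neg (le_fm k g))
     (imp_fm (Conj (Neg (le_fm d z)) (Conj (le_fm z k) (neq_fm z k))) (le_fm z g)))"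

lemma sat_box_boundary:
  assumes "distinct [d, g, r1, p, k1, k2, w, z1, z2, w1]"
  shows "sat (ex_all ([k1, k2, w], [z1, z2, w1], Conj (next_column_fm d g k1 z1)
      (Conj (next_column_fm d k1 k2 z2) (Conj (box_fm k1 r1 p w1) (Neg (box_fm k2 r1 p w)))))) e \<longleftrightarrow>
    (\<exists>K1 K2. box_boundary (e d) (e g) K1 K2 (e r1) (e p))"
  using assms by (simp add: ex_all_def box_boundary_def next_column_def contains_box_def imp_conv_disj disj_commute disj_left_commute)

lemma sat_ex_all_matrix: "sat (ex_all ([], [], M)) e \<longleftrightarrow> sat M e"
  by (simp add: ex_all_def)

abbreviation le_pf :: "nat \<Rightarrow> nat \<Rightarrow> prenex" where
  "le_pf x y \<equiv> ([], [], le_fm x y)"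

abbreviation not_le_pf :: "nat \<Rightarrow> nat \<Rightarrow> prenex" where
  "not_le_pf x y \<equiv> ([], [], Neg (le_fm x y))"

abbreviation nonempty_row_pf :: "nat \<Rightarrow> nat \<Rightarrow> prenex" where
  "nonempty_row_pf x y \<equiv> ([y], [], Conj (row_fm x) (Neg (le_fm x y)))"

abbreviation not_next_row_pf :: "nat \<Rightarrow> nat \<Rightarrow> nat \<Rightarrow> prenex" where
  "not_next_row_pf t t' z \<equiv> ([z], [], Neg (next_row_fm t t' z))"

abbreviation not_row_two_pf :: "nat \<Rightarrow> nat \<Rightarrow> prenex" where
  "not_row_two_pf d z \<equiv> ([z], [], Neg (row_two_fm d z))"

abbreviation not_truncation_pf :: "nat \<Rightarrow> nat \<Rightarrow> nat \<Rightarrow> nat \<Rightarrow> prenex" where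
  "not_truncation_pf g th t w \<equiv> ([w], [], Neg (truncation_fm g th t w))"

abbreviation not_chains_above_pf :: "nat \<Rightarrow> nat \<Rightarrow> nat \<Rightarrow> nat \<Rightarrow> nat \<Rightarrow> prenex" where
  "not_chains_above_pf t g u v w \<equiv> ([u, v], [w], Conj (unique_between_fm u v g w) (Neg (le_fm t u)))"

abbreviation not_same_wide_rows_pf ::
    "nat \<Rightarrow> nat \<Rightarrow> nat \<Rightarrow> nat \<Rightarrow> nat \<Rightarrow> nat \<Rightarrow> nat \<Rightarrow> nat \<Rightarrow> nat \<Rightarrow> prenex" where
  "not_same_wide_rows_pf d g s2 p r2 k w w1 w2 \<equiv> ([k, w], [w1, w2], Conj (Neg (le_fm d k))
     (Disj (Conj (box_fm k s2 g w1) (Neg (box_fm k r2 p w)))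
           (Conj (Neg (box_fm k s2 g w)) (box_fm k r2 p w2))))"

abbreviation box_boundary_pf ::
    "nat \<Rightarrow> nat \<Rightarrow> nat \<Rightarrow> nat \<Rightarrow> nat \<Rightarrow> nat \<Rightarrow> nat \<Rightarrow> nat \<Rightarrow> nat \<Rightarrow> nat \<Rightarrow> prenex" where
  "box_boundary_pf d g r1 p k1 k2 w z1 z2 w1 \<equiv> ([k1, k2, w], [z1, z2, w1],
     Conj (next_column_fm d g k1 z1) (Conj (next_column_fm d k1 k2 z2)
       (Conj (box_fm k1 r1 p w1) (Neg (box_fm k2 r1 p w)))))"

text \<open>Variables 0, 1, 2 stand for \<rho>, \<sigma>, \<pi>, and 3, ..., 9 for \<rho>1, \<rho>2, \<sigma>1, \<sigma>2, D, G, T;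
  every component binds its own variables from 10 on, so the components are separated.\<close>
definition counts_parts_fm :: fm where
  "counts_parts_fm = allblock [3, 4, 5, 6, 7, 8, 9] (ex_all
     (conj_prenex (nonempty_row_pf 0 10) (conj_prenex (nonempty_row_pf 1 11)
     (disj_prenex (not_next_row_pf 0 3 12) (disj_prenex (not_next_row_pf 3 4 13)
     (disj_prenex (not_next_row_pf 1 5 14) (disj_prenex (not_next_row_pf 5 6 15)
     (disj_prenex (not_row_two_pf 7 16) (disj_prenex (not_truncation_pf 8 5 9 17)
     (disj_prenex (not_le_pf 1 8) (disj_prenex (le_pf 6 8)
     (disj_prenex (not_chains_above_pf 9 8 18 19 20)
     (disj_prenex (not_same_wide_rows_pf 7 8 6 2 4 21 22 23 24)
       (box_boundary_pf 7 8 3 2 25 26 27 28 29 30))))))))))))))"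

lemma is_Pi3_counts_parts_fm: "is_Pi 3 counts_parts_fm"
  unfolding counts_parts_fm_def by (rule is_Pi3_allblock_ex_all) simp

lemma sat_counts_parts_fm: "sat counts_parts_fm e \<longleftrightarrow> counts_parts (e 0) (e 1) (e 2)"
  unfolding counts_parts_fm_def
  by (simp add: sat_conj_prenex sat_disj_prenex separated_def sat_nonempty_row sat_not_next_row
      sat_not_row_two sat_not_truncation sat_not_chains_above sat_not_same_wide_rows
      sat_box_boundary sat_ex_all_matrix counts_parts_def) blast

theorem proposition3p11:
  shows "Pi_definable3 3 (\<lambda>\<rho> \<sigma> \<pi>. \<exists>n r. 1 \<le> n \<and> 1 \<le> r \<and>
            \<sigma> = single n \<and> \<rho> = single r \<and> mult_part r \<pi> = n)"
  unfolding Pi_definable3_def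
proof (intro exI conjI allI)
  show "is_Pi 3 counts_parts_fm"
    by (rule is_Pi3_counts_parts_fm)
  show "sat counts_parts_fm e \<longleftrightarrow> (\<exists>n r. 1 \<le> n \<and> 1 \<le> r \<and>
      e 1 = single n \<and> e 0 = single r \<and> mult_part r (e 2) = n)" for e
    unfolding sat_counts_parts_fm by (rule counts_parts_iff)
qed

end
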